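(* Let $\mathcal{H}$ be a hypothesis set of functions $h\colon\mathcal{X}\times(\mathcal{Y}\cup\{n+1\})\to\mathbb{R}$, let $c\in(0,1)$, and let $\ell$ be a loss function on $\mathcal{H}\times\mathcal{X}\times(\mathcal{Y}\cup\{n+1\})$. Assume that $\ell$ admits an $\mathcal{H}$-consistency bound with respect to the multi-class zero-one loss $\ell_{0-1}$ (over the $n+1$ labels $\mathcal{Y}\cup\{n+1\}$) with a concave function $\Gamma$, that is, for every distribution over $\mathcal{X}\times(\mathcal{Y}\cup\{n+1\})$ and all $h\in\mathcal{H}$, \[ \mathcal{E}_{\ell_{0-1}}(h)-\mathcal{E}^*_{\ell_{0-1}}(\mathcal{H})+\mathcal{M}_{\ell_{0-1}}(\mathcal{H})\le\Gamma\big(\mathcal{E}_{\ell}(h)-\mathcal{E}^*_{\ell}(\mathcal{H})+\mathcal{M}_{\ell}(\mathcal{H})\big). \] Define $\mathsf{L}(h,x,y)=\ell(h,x,y)+(1-c)\,\ell(h,x,n+1)$ for $(x,y)\in\mathcal{X}\times\mathcal{Y}$. Then for every distribution $\mathcal{D}$ over $\mathcal{X}\times\mathcal{Y}$ and all $h\in\mathcal{H}$, \[ \mathcal{E}_{\mathsf{L}_{\mathrm{abs}}}(h)-\mathcal{E}^*_{\mathsf{L}_{\mathrm{abs}}}(\mathcal{H})+\mathcal{M}_{\mathsf{L}_{\mathrm{abs}}}(\mathcal{H})\le(2-c)\,\Gamma\Big(\frac{\mathcal{E}_{\mathsf{L}}(h)-\mathcal{E}^*_{\mathsf{L}}(\mathcal{H})+\mathcal{M}_{\mathsf{L}}(\mathcal{H})}{2-c}\Big).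 \]
   Context: Let $\mathcal{X}$ be an input space and $\mathcal{Y}=\{1,\dots,n\}$ with $n\ge 2$. For a distribution $\mathcal{D}$ on $\mathcal{X}\times\mathcal{Y}$, $p(x,y)=\mathcal{D}(Y=y\mid X=x)$. For $h\colon\mathcal{X}\times(\mathcal{Y}\cup\{n+1\})\to\mathbb{R}$ and $x\in\mathcal{X}$, the predicted label $\mathsf{h}(x)$ is $n+1$ if $h(x,n+1)\ge\max_{y\in\mathcal{Y}}h(x,y)$; otherwise $\mathsf{h}(x)=\operatorname{argmax}_{y\in\mathcal{Y}}h(x,y)$, with ties broken by a fixed deterministic rule. The multi-class zero-one loss over $\mathcal{Y}\cup\{n+1\}$ is $\ell_{0-1}(h,x,y)=\mathbb{1}_{\mathsf{h}(x)\neq y}$. The score-based abstention loss with constant cost $c\in(0,1)$ is $\mathsf{L}_{\mathrm{abs}}(h,x,y)=\mathbb{1}_{\mathsf{h}(x)\neq y}\mathbb{1}_{\mathsf{h}(x)\neq n+1}+c\,\mathbb{1}_{\mathsf{h}(x)=n+1}$. For a loss $\mathsf{L}$ and a given distribution: $\mathcal{E}_{\mathsf{L}}(h)=\mathbb{E}_{(x,y)}[\mathsf{L}(h,x,y)]$, $\mathcal{E}^*_{\mathsf{L}}(\mathcal{H})=\inf_{h\in\mathcal{H}}\mathcal{E}_{\mathsf{L}}(h)$, and the minimizability gap $\mathcal{M}_{\mathsf{L}}(\mathcal{H})=\mathcal{E}^*_{\mathsf{L}}(\mathcal{H})-\mathbb{E}_x\big[\inf_{h\in\mathcal{H}}\mathbb{E}_y[\mathsf{L}(h,X,y)\mid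 X=x]\big]$. *)

theory Defs
  imports "HOL-Probability.Probability"
begin

text \<open>Labels: \<Y> = {1..n} (natural numbers), the abstention label is n+1.
  A scoring function is h :: 'x \<Rightarrow> nat \<Rightarrow> real; only its values on labels in {1..n+1} matter.\<close>

type_synonym 'x scorer = "'x \<Rightarrow> nat \<Rightarrow> real"
type_synonym 'x loss = "'x scorer \<Rightarrow> 'x \<Rightarrow> nat \<Rightarrow> real"

definition pred_label :: "nat \<Rightarrow> 'x scorer \<Rightarrow> 'x \<Rightarrow> nat" where
  "pred_label n h x =
     (let m = Max ((\<lambda>y. h x y) ` {1..n}) in
      if h x (n+1) \<ge> m then n+1 else (LEAST y. y \<in> {1..n} \<and> h x y = m))"

definition zero_one_loss :: "nat \<Rightarrow> 'x loss" where
  "zero_one_loss n h x y = (if pred_label n h x \<noteq> y then 1 else 0)"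

definition abs_loss :: "real \<Rightarrow> nat \<Rightarrow> 'x loss" where
  "abs_loss c n h x y =
     (if pred_label n h x \<noteq> y \<and> pred_label n h x \<noteq> n+1 then 1 else 0)
     + c * (if pred_label n h x = n+1 then 1 else 0)"

text \<open>A distribution on X \<times> Ys, represented by its X-marginal \<mu> (a probability
  measure on the fixed measurable space Mx) and the conditional probabilities
  p x y = D(Y = y | X = x).\<close>
definition is_dist :: "'x measure \<Rightarrow> nat set \<Rightarrow> 'x measure \<Rightarrow> ('x \<Rightarrow> nat \<Rightarrow> real) \<Rightarrow> bool" where
  "is_dist Mx Ys \<mu> p \<longleftrightarrow>
     prob_space \<mu> \<and> sets \<mu> = sets Mx \<and>
     (\<forall>y\<in>Ys. (\<lambda>x. p x y) \<in> borel_measurable Mx) \<and>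
     (\<forall>x\<in>space \<mu>. (\<forall>y\<in>Ys. 0 \<le> p x y) \<and> (\<Sum>y\<in>Ys. p x y) = 1)"

definition cond_risk :: "nat set \<Rightarrow> ('x \<Rightarrow> nat \<Rightarrow> real) \<Rightarrow> 'x loss \<Rightarrow> 'x scorer \<Rightarrow> 'x \<Rightarrow> real" where
  "cond_risk Ys p L h x = (\<Sum>y\<in>Ys. p x y * L h x y)"

definition risk :: "'x measure \<Rightarrow> nat set \<Rightarrow> ('x \<Rightarrow> nat \<Rightarrow> real) \<Rightarrow> 'x loss \<Rightarrow> 'x scorer \<Rightarrow> real" where
  "risk \<mu> Ys p L h = (\<integral>x. cond_risk Ys p L h x \<partial>\<mu>)"

definition best_risk :: "'x measure \<Rightarrow> nat set \<Rightarrow> ('x \<Rightarrow> nat \<Rightarrow> real) \<Rightarrow> 'x loss \<Rightarrow> 'x scorer set \<Rightarrow> real" where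
  "best_risk \<mu> Ys p L H = (INF h\<in>H. risk \<mu> Ys p L h)"

definition min_gap :: "'x measure \<Rightarrow> nat set \<Rightarrow> ('x \<Rightarrow> nat \<Rightarrow> real) \<Rightarrow> 'x loss \<Rightarrow> 'x scorer set \<Rightarrow> real" where
  "min_gap \<mu> Ys p L H =
     best_risk \<mu> Ys p L H - (\<integral>x. (INF h\<in>H. cond_risk Ys p L h x) \<partial>\<mu>)"

definition regret_gap :: "'x measure \<Rightarrow> nat set \<Rightarrow> ('x \<Rightarrow> nat \<Rightarrow> real) \<Rightarrow> 'x loss \<Rightarrow> 'x scorer set \<Rightarrow> 'x scorer \<Rightarrow> real" where
  "regret_gap \<mu> Ys p L H h = risk \<mu> Ys p L h - best_risk \<mu> Ys p L H + min_gap \<mu> Ys p L H"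

end

theory Submission
  imports Defs
begin

(* Extend the conditional distribution p on {1..n} to the distribution q on {1..n+1} that
   gives the abstention label n+1 the mass (1-c)/(2-c) and rescales p by 1/(2-c).  For every x
   and every scorer, the conditional abstention risk under p is (2-c) times the conditional
   zero-one risk under q minus (1-c), and the conditional risk of the augmented loss under p is
   exactly (2-c) times the conditional l-risk under q.  Infima over H and integrals over x
   preserve these relations (up to an inequality coming from integrability), so the assumed
   bound for q yields the claim. *)

lemma measurable_pred_label:
  assumes "\<And>y. (\<lambda>x. h x y) \<in> borel_measurable M"
  shows "(\<lambda>x. pred_label n h x) \<in> measurable M (count_space UNIV)"
proof -
  have "(\<lambda>x. Max ((\<lambda>y. h x y) ` {1..n})) \<in> borel_measurable M"
    by (rule borel_measurable_Max) (auto intro: assms)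
  note [measurable] = this assms
  show ?thesis
    unfolding pred_label_def Let_def by measurable
qed

lemma borel_measurable_zero_one_loss:
  assumes "\<And>y. (\<lambda>x. h x y) \<in> borel_measurable M"
  shows "(\<lambda>x. zero_one_loss n h x y) \<in> borel_measurable M"
proof -
  note [measurable] = measurable_pred_label[OF assms]
  show ?thesis
    unfolding zero_one_loss_def by measurable
qed

lemma integrable_cond_risk_zero_one_loss:
  assumes dist: "is_dist M Ys \<mu> p" and "\<And>y. (\<lambda>x. h x y) \<in> borel_measurable M"
  shows "integrable \<mu> (cond_risk Ys p (zero_one_loss n) h)"
proof -
  interpret prob_space \<mu>
    using dist by (simp add: is_dist_def)
  have sets: "sets \<mu> = sets M" and p: "\<And>y. y \<in> Ys \<Longrightarrow> (\<lambda>x. p x y) \<in> borel_measurable M"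
    using dist by (auto simp: is_dist_def)
  have "cond_risk Ys p (zero_one_loss n) h \<in> borel_measurable \<mu>"
    unfolding cond_risk_def measurable_cong_sets[OF sets refl]
    using p borel_measurable_zero_one_loss[OF assms(2)] by measurable
  moreover have "\<bar>cond_risk Ys p (zero_one_loss n) h x\<bar> \<le> 1" if x: "x \<in> space \<mu>" for x
  proof -
    have p_nonneg: "\<forall>y\<in>Ys. 0 \<le> p x y" and p_sum: "(\<Sum>y\<in>Ys. p x y) = 1"
      using dist x by (auto simp: is_dist_def)
    have "0 \<le> cond_risk Ys p (zero_one_loss n) h x"
      unfolding cond_risk_def using p_nonneg by (intro sum_nonneg) (simp add: zero_one_loss_def)
    moreover have "cond_risk Ys p (zero_one_loss n) h x \<le> (\<Sum>y\<in>Ys. p x y)"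
      unfolding cond_risk_def using p_nonneg by (intro sum_mono) (simp add: zero_one_loss_def)
    ultimately show ?thesis
      using p_sum by simp
  qed
  ultimately show ?thesis
    by (intro integrable_const_bound[where B = 1]) auto
qed

lemma cINF_affine:
  fixes f :: "'a \<Rightarrow> real"
  assumes "H \<noteq> {}" and "bdd_below (f ` H)" and "0 \<le> a"
  shows "(INF h\<in>H. a * f h + b) = a * (INF h\<in>H. f h) + b"
proof -
  have "mono (\<lambda>t. a * t + b)"
    using \<open>0 \<le> a\<close> by (simp add: mono_def mult_left_mono)
  moreover have "continuous (at_right (Inf (f ` H))) (\<lambda>t. a * t + b)"
    by (intro continuous_intros)
  ultimately show ?thesis
    using continuous_at_Inf_mono[of "\<lambda>t. a * t + b" "f ` H"] assms by (simp add: image_image)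
qed

lemma (in prob_space) integral_affine_ge:
  fixes f g :: "'a \<Rightarrow> real"
  assumes "0 < a" and "b \<le> 0" and fg: "\<And>x. x \<in> space M \<Longrightarrow> f x = a * g x + b"
  shows "a * (\<integral>x. g x \<partial>M) + b \<le> (\<integral>x. f x \<partial>M)"
proof (cases "integrable M g")
  case True
  have "(\<integral>x. f x \<partial>M) = (\<integral>x. a * g x + b \<partial>M)"
    using fg by (rule Bochner_Integration.integral_cong[OF refl])
  also have "\<dots> = a * (\<integral>x. g x \<partial>M) + b"
    using True by (simp add: prob_space)
  finally show ?thesis by simp
next
  case False \<comment> \<open>then f is not integrable either, both integrals are 0, and b \<le> 0 is needed\<close>
  have "integrable M g \<longleftrightarrow> integrable M (\<lambda>x. (f x - b) / a)"
    using fg \<open>0 < a\<close> by (intro Bochner_Integration.integrable_cong) auto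
  then have "\<not> integrable M f"
    using False by auto
  then show ?thesis
    using False \<open>b \<le> 0\<close> by (simp add: not_integrable_integral_eq)
qed

lemma regret_gap_affine_le:
  assumes "prob_space \<mu>" and "h \<in> H" and "0 < a" and "b \<le> 0"
    and affine: "\<And>g x. g \<in> H \<Longrightarrow> x \<in> space \<mu> \<Longrightarrow>
      cond_risk Ys p L g x = a * cond_risk Ys' q L' g x + b"
    and bdd: "\<And>x. x \<in> space \<mu> \<Longrightarrow> bdd_below ((\<lambda>g. cond_risk Ys' q L' g x) ` H)"
    and "integrable \<mu> (cond_risk Ys' q L' h)"
  shows "regret_gap \<mu> Ys p L H h \<le> a * regret_gap \<mu> Ys' q L' H h"
proof -
  interpret prob_space \<mu> by fact
  have "risk \<mu> Ys p L h = (\<integral>x. a * cond_risk Ys' q L' h x + b \<partial>\<mu>)"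
    unfolding risk_def using affine \<open>h \<in> H\<close> by (intro Bochner_Integration.integral_cong) auto
  also have "\<dots> = a * risk \<mu> Ys' q L' h + b"
    unfolding risk_def using \<open>integrable \<mu> _\<close> by (simp add: prob_space)
  finally have risk: "risk \<mu> Ys p L h = a * risk \<mu> Ys' q L' h + b" .
  have "(INF g\<in>H. cond_risk Ys p L g x) = a * (INF g\<in>H. cond_risk Ys' q L' g x) + b"
    if "x \<in> space \<mu>" for x
  proof -
    have "(INF g\<in>H. cond_risk Ys p L g x) = (INF g\<in>H. a * cond_risk Ys' q L' g x + b)"
      using affine that by (intro INF_cong) auto
    also have "\<dots> = a * (INF g\<in>H. cond_risk Ys' q L' g x) + b"
      using \<open>h \<in> H\<close> \<open>0 < a\<close> by (intro cINF_affine bdd that) auto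
    finally show ?thesis .
  qed
  then have "a * (\<integral>x. (INF g\<in>H. cond_risk Ys' q L' g x) \<partial>\<mu>) + b
      \<le> (\<integral>x. (INF g\<in>H. cond_risk Ys p L g x) \<partial>\<mu>)"
    by (intro integral_affine_ge \<open>0 < a\<close> \<open>b \<le> 0\<close>)
  then show ?thesis
    unfolding regret_gap_def min_gap_def risk by (simp add: right_diff_distrib)
qed

lemma regret_gap_scaled:
  assumes "h \<in> H" and "0 \<le> a"
    and scaled: "\<And>g x. g \<in> H \<Longrightarrow> x \<in> space \<mu> \<Longrightarrow>
      cond_risk Ys p L g x = a * cond_risk Ys' q L' g x"
    and bdd: "\<And>x. x \<in> space \<mu> \<Longrightarrow> bdd_below ((\<lambda>g. cond_risk Ys' q L' g x) ` H)"
  shows "regret_gap \<mu> Ys p L H h = a * regret_gap \<mu> Ys' q L' H h"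
proof -
  have risk: "risk \<mu> Ys p L h = a * risk \<mu> Ys' q L' h"
    unfolding risk_def integral_mult_right_zero[symmetric]
    using scaled \<open>h \<in> H\<close> by (intro Bochner_Integration.integral_cong) auto
  have "(INF g\<in>H. cond_risk Ys p L g x) = a * (INF g\<in>H. cond_risk Ys' q L' g x)"
    if "x \<in> space \<mu>" for x
  proof -
    have "(INF g\<in>H. cond_risk Ys p L g x) = (INF g\<in>H. a * cond_risk Ys' q L' g x + 0)"
      using scaled that by (intro INF_cong) auto
    also have "\<dots> = a * (INF g\<in>H. cond_risk Ys' q L' g x) + 0"
      using \<open>h \<in> H\<close> \<open>0 \<le> a\<close> by (intro cINF_affine bdd that) auto
    finally show ?thesis by simp
  qed
  then have "(\<integral>x. (INF g\<in>H. cond_risk Ys p L g x) \<partial>\<mu>)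
      = a * (\<integral>x. (INF g\<in>H. cond_risk Ys' q L' g x) \<partial>\<mu>)"
    unfolding integral_mult_right_zero[symmetric] by (rule Bochner_Integration.integral_cong[OF refl])
  then show ?thesis
    unfolding regret_gap_def min_gap_def risk by (simp add: right_diff_distrib)
qed

definition abstention_extension :: "real \<Rightarrow> nat \<Rightarrow> ('x \<Rightarrow> nat \<Rightarrow> real) \<Rightarrow> 'x \<Rightarrow> nat \<Rightarrow> real" where
  "abstention_extension c n p x y = (if y = n + 1 then (1 - c) / (2 - c) else p x y / (2 - c))"

lemma sum_abstention_extension:
  "(\<Sum>y\<in>{1..n+1}. abstention_extension c n p x y * f y)
     = ((1 - c) * f (n + 1) + (\<Sum>y\<in>{1..n}. p x y * f y)) / (2 - c)"
proof -
  have "{1..n+1} = insert (n + 1) {1..n}" by auto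
  then show ?thesis
    by (simp add: abstention_extension_def add_divide_distrib sum_divide_distrib)
qed

lemma is_dist_abstention_extension:
  assumes "is_dist M {1..n} \<mu> p" and "c \<le> 1"
  shows "is_dist M {1..n+1} \<mu> (abstention_extension c n p)"
  unfolding is_dist_def
proof (intro conjI ballI)
  fix x assume x: "x \<in> space \<mu>"
  have "(\<Sum>y\<in>{1..n+1}. abstention_extension c n p x y)
      = ((1 - c) + (\<Sum>y\<in>{1..n}. p x y)) / (2 - c)"
    using sum_abstention_extension[where f = "\<lambda>_. 1"] by simp
  then show "(\<Sum>y\<in>{1..n+1}. abstention_extension c n p x y) = 1"
    using assms x \<open>c \<le> 1\<close> by (simp add: is_dist_def)
  show "0 \<le> abstention_extension c n p x y" if "y \<in> {1..n+1}" for y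
    using assms x that by (auto simp: is_dist_def abstention_extension_def)
next
  fix y assume "y \<in> {1..n+1}"
  then have "y = n + 1 \<or> (\<lambda>x. p x y) \<in> borel_measurable M"
    using assms by (auto simp: is_dist_def)
  then show "(\<lambda>x. abstention_extension c n p x y) \<in> borel_measurable M"
    by (auto simp: abstention_extension_def)
qed (use assms in \<open>simp_all add: is_dist_def\<close>)

lemma cond_risk_abs_loss_eq:
  assumes "(\<Sum>y\<in>{1..n}. p x y) = 1" and "c \<noteq> 2"
  shows "cond_risk {1..n} p (abs_loss c n) g x
    = (2 - c) * cond_risk {1..n+1} (abstention_extension c n p) (zero_one_loss n) g x - (1 - c)"
proof (cases "pred_label n g x = n + 1")
  case True
  then have "cond_risk {1..n} p (abs_loss c n) g x = (\<Sum>y\<in>{1..n}. p x y) * c"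
    unfolding cond_risk_def sum_distrib_right by (intro sum.cong) (auto simp: abs_loss_def)
  moreover have "cond_risk {1..n+1} (abstention_extension c n p) (zero_one_loss n) g x
      = (\<Sum>y\<in>{1..n}. p x y) / (2 - c)"
    unfolding cond_risk_def sum_abstention_extension
    using True by (auto simp: zero_one_loss_def intro!: sum.cong)
  ultimately show ?thesis
    using assms by (simp add: field_simps)
next
  case False
  then have "cond_risk {1..n} p (abs_loss c n) g x = (\<Sum>y\<in>{1..n}. p x y * zero_one_loss n g x y)"
    unfolding cond_risk_def by (intro sum.cong) (auto simp: abs_loss_def zero_one_loss_def)
  moreover have "cond_risk {1..n+1} (abstention_extension c n p) (zero_one_loss n) g x
      = ((1 - c) + (\<Sum>y\<in>{1..n}. p x y * zero_one_loss n g x y)) / (2 - c)"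
    unfolding cond_risk_def sum_abstention_extension using False by (simp add: zero_one_loss_def)
  ultimately show ?thesis
    using \<open>c \<noteq> 2\<close> by (simp add: field_simps)
qed

lemma cond_risk_augmented_loss_eq:
  assumes "(\<Sum>y\<in>{1..n}. p x y) = 1" and "c \<noteq> 2"
  shows "cond_risk {1..n} p (\<lambda>h x y. l h x y + (1 - c) * l h x (n+1)) g x
    = (2 - c) * cond_risk {1..n+1} (abstention_extension c n p) l g x"
proof -
  have "cond_risk {1..n} p (\<lambda>h x y. l h x y + (1 - c) * l h x (n+1)) g x
      = (\<Sum>y\<in>{1..n}. p x y * l g x y) + (\<Sum>y\<in>{1..n}. p x y) * ((1 - c) * l g x (n+1))"
    unfolding cond_risk_def by (simp add: distrib_left sum.distrib sum_distrib_right)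
  then show ?thesis
    unfolding cond_risk_def sum_abstention_extension using assms by simp
qed


theorem theorem3:
  fixes Mx :: "'x measure" and H :: "'x scorer set" and l :: "'x loss"
    and n :: nat and c :: real and \<Gamma> :: "real \<Rightarrow> real"
  assumes n2: "n \<ge> 2"
    and c_pos: "0 < c" and c_lt1: "c < 1"
    and H_meas: "\<forall>h\<in>H. \<forall>y. (\<lambda>x. h x y) \<in> borel_measurable Mx"
    and l_nonneg: "\<forall>h x y. 0 \<le> l h x y"
    and \<Gamma>_concave: "concave_on {0..} \<Gamma>"
    and hcb: "\<forall>\<mu> p. is_dist Mx {1..n+1} \<mu> p \<longrightarrow>
               (\<forall>h\<in>H. regret_gap \<mu> {1..n+1} p (zero_one_loss n) H h
                        \<le> \<Gamma> (regret_gap \<mu> {1..n+1} p l H h))"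
  shows "\<forall>\<mu> p. is_dist Mx {1..n} \<mu> p \<longrightarrow>
           (\<forall>h\<in>H. regret_gap \<mu> {1..n} p (abs_loss c n) H h
              \<le> (2 - c) * \<Gamma> (regret_gap \<mu> {1..n} p
                     (\<lambda>h x y. l h x y + (1 - c) * l h x (n+1)) H h / (2 - c)))"
proof (intro allI impI ballI)
  fix \<mu> p h assume dist: "is_dist Mx {1..n} \<mu> p" and "h \<in> H"
  define q where "q = abstention_extension c n p"
  have dist_q: "is_dist Mx {1..n+1} \<mu> q"
    unfolding q_def using dist c_lt1 by (intro is_dist_abstention_extension) auto
  have p_sum: "(\<Sum>y\<in>{1..n}. p x y) = 1" if "x \<in> space \<mu>" for x
    using dist that by (simp add: is_dist_def)
  have bdd: "bdd_below ((\<lambda>g. cond_risk {1..n+1} q L g x) ` H)"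
    if "x \<in> space \<mu>" and "\<forall>h x y. 0 \<le> L h x y" for L x
    using dist_q that unfolding cond_risk_def is_dist_def
    by (intro bdd_belowI2[where m = 0] sum_nonneg mult_nonneg_nonneg) auto
  have abs_eq: "cond_risk {1..n} p (abs_loss c n) g x
      = (2 - c) * cond_risk {1..n+1} q (zero_one_loss n) g x + (c - 1)"
    if "x \<in> space \<mu>" for g x
    using cond_risk_abs_loss_eq[where p = p and x = x and g = g] p_sum[OF that] c_lt1
    by (simp add: q_def)
  have augmented_eq: "cond_risk {1..n} p (\<lambda>h x y. l h x y + (1 - c) * l h x (n+1)) g x
      = (2 - c) * cond_risk {1..n+1} q l g x"
    if "x \<in> space \<mu>" for g x
    unfolding q_def using p_sum[OF that] c_lt1 by (intro cond_risk_augmented_loss_eq) auto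
  have augmented_gap: "regret_gap \<mu> {1..n} p (\<lambda>h x y. l h x y + (1 - c) * l h x (n+1)) H h
      = (2 - c) * regret_gap \<mu> {1..n+1} q l H h"
    using \<open>h \<in> H\<close> c_lt1 p_sum l_nonneg
    by (intro regret_gap_scaled augmented_eq bdd) auto
  have "regret_gap \<mu> {1..n} p (abs_loss c n) H h
      \<le> (2 - c) * regret_gap \<mu> {1..n+1} q (zero_one_loss n) H h"
    using dist \<open>h \<in> H\<close> c_lt1 H_meas
    by (intro regret_gap_affine_le[where b = "c - 1"] abs_eq bdd
        integrable_cond_risk_zero_one_loss[OF dist_q])
      (auto simp: is_dist_def zero_one_loss_def)
  also have "\<dots> \<le> (2 - c) * \<Gamma> (regret_gap \<mu> {1..n+1} q l H h)"
    using hcb dist_q \<open>h \<in> H\<close> c_lt1 by simp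
  finally show "regret_gap \<mu> {1..n} p (abs_loss c n) H h
      \<le> (2 - c) * \<Gamma> (regret_gap \<mu> {1..n} p
             (\<lambda>h x y. l h x y + (1 - c) * l h x (n+1)) H h / (2 - c))"
    using augmented_gap c_lt1 by simp
qed

end
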